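(* Let $\mathbf{\Omega}\subset\mathbb{R}^n$ be a finite set, let $f:\mathbf{\Omega}\to\mathbb{R}$, and let $\lambda=\sum_{\mathbf{v}\in\mathbf{\Omega}}\delta_{\mathbf{v}}$ be the counting measure on $\mathbf{\Omega}$. Let $\underline{f}=\min_{\mathbf{\Omega}}f$, $\overline{f}=\max_{\mathbf{\Omega}}f$, $\mathcal{Z}=\{f(\mathbf{v}):\mathbf{v}\in\mathbf{\Omega}\}$ and $\bar r=\mathrm{card}(\mathcal{Z})-1$. Let $\#\lambda$ be the pushforward of $\lambda$ by $f$, with moments $\#\lambda_k=\sum_{\mathbf{v}\in\mathbf{\Omega}}f(\mathbf{v})^k$, and for $r\in\mathbb{N}$ let $\mathbf{H}_r(\#\lambda)$ and $\mathbf{H}_r(x;\#\lambda)$ be the $(r+1)\times(r+1)$ Hankel matrices with $(i,j)$ entries $\#\lambda_{i+j}$ and $\#\lambda_{i+j+1}$ respectively ($i,j=0,\dots,r$), and \[\tau^\ell_r=\sup_a\{a:\ \mathbf{H}_r(x;\#\lambda)\succeq a\,\mathbf{H}_r(\#\lambda)\},\qquad \tau^u_r=\inf_a\{a:\ a\,\mathbf{H}_r(\#\lambda)\succeq \mathbf{H}_r(x;\#\lambda)\}.\] Then $\tau^\ell_{\bar r}=\underline{f}$ and $\tau^u_{\bar r}=\overline{f}$.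
   Context: $\delta_{\mathbf{v}}$ is the Dirac measure at $\mathbf{v}$. The pushforward is $\#\lambda(C)=\lambda(f^{-1}(C))$. $\mathbf{A}\succeq\mathbf{B}$ means $\mathbf{A}-\mathbf{B}$ is positive semidefinite. *)

theory Defs
  imports "HOL-Analysis.Analysis"
begin

definition push_moment :: "('a \<Rightarrow> real) \<Rightarrow> 'a set \<Rightarrow> nat \<Rightarrow> real" where
  "push_moment f \<Omega> k = (\<Sum>v\<in>\<Omega>. f v ^ k)"

text \<open>Hankel matrices H_r(#lambda) and H_r(x;#lambda), entries indexed by i,j = 0..r
  (represented as functions nat => nat => real, only entries i,j <= r matter).\<close>
definition hankel :: "(nat \<Rightarrow> real) \<Rightarrow> nat \<Rightarrow> nat \<Rightarrow> real" where
  "hankel m i j = m (i + j)"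

definition hankel_x :: "(nat \<Rightarrow> real) \<Rightarrow> nat \<Rightarrow> nat \<Rightarrow> real" where
  "hankel_x m i j = m (i + j + 1)"

definition psd_mat :: "nat \<Rightarrow> (nat \<Rightarrow> nat \<Rightarrow> real) \<Rightarrow> bool" where
  "psd_mat r M \<longleftrightarrow> (\<forall>x :: nat \<Rightarrow> real. 0 \<le> (\<Sum>i\<le>r. \<Sum>j\<le>r. x i * M i j * x j))"

definition tau_l :: "(nat \<Rightarrow> real) \<Rightarrow> nat \<Rightarrow> real" where
  "tau_l m r = Sup {a. psd_mat r (\<lambda>i j. hankel_x m i j - a * hankel m i j)}"

definition tau_u :: "(nat \<Rightarrow> real) \<Rightarrow> nat \<Rightarrow> real" where
  "tau_u m r = Inf {a. psd_mat r (\<lambda>i j. a * hankel m i j - hankel_x m i j)}"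

end

theory Submission
  imports Defs "HOL-Computational_Algebra.Polynomial"
begin

text \<open>By linearity, \<open>H\<^sub>r(x;#\<lambda>) - a H\<^sub>r(#\<lambda>)\<close> is the moment matrix of
  \<open>(f - a) \<lambda>\<close>, whose quadratic form at a coefficient vector \<open>c\<close> equals
  \<open>\<Sum>\<^sub>v (f v - a) p(f v)\<^sup>2\<close> with \<open>p = \<Sum>\<^sub>i c\<^sub>i X\<^sup>i\<close>. It is nonnegative for every \<open>p\<close>
  of degree at most \<open>r\<close> iff \<open>a \<le> f\<close> on \<open>\<Omega>\<close>: if \<open>a > f v\<^sub>0\<close>, take for \<open>p\<close> the
  polynomial of degree \<open>card (f ` \<Omega>) - 1 \<le> r\<close> vanishing on all values of \<open>f\<close> except \<open>f v\<^sub>0\<close>.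
  Hence the feasible set of \<open>\<tau>\<^sup>l\<^sub>r\<close> is exactly \<open>{..min f}\<close>, and symmetrically the
  feasible set of \<open>\<tau>\<^sup>u\<^sub>r\<close> is \<open>{max f..}\<close>.\<close>

lemma quadratic_form_moment_matrix:
  fixes g h :: "'a \<Rightarrow> real"
  shows "(\<Sum>i\<le>r. \<Sum>j\<le>r. x i * (\<Sum>v\<in>\<Omega>. g v * h v ^ (i + j)) * x j)
       = (\<Sum>v\<in>\<Omega>. g v * (\<Sum>i\<le>r. x i * h v ^ i)\<^sup>2)"
proof -
  have "(\<Sum>i\<le>r. \<Sum>j\<le>r. x i * (\<Sum>v\<in>\<Omega>. g v * h v ^ (i + j)) * x j)
      = (\<Sum>i\<le>r. \<Sum>j\<le>r. \<Sum>v\<in>\<Omega>. g v * ((x i * h v ^ i) * (x j * h v ^ j)))"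
    by (simp add: sum_distrib_left sum_distrib_right power_add mult_ac)
  also have "\<dots> = (\<Sum>v\<in>\<Omega>. g v * (\<Sum>i\<le>r. \<Sum>j\<le>r. (x i * h v ^ i) * (x j * h v ^ j)))"
    by (simp add: sum.swap[of _ \<Omega>] sum_distrib_left)
  also have "\<dots> = (\<Sum>v\<in>\<Omega>. g v * (\<Sum>i\<le>r. x i * h v ^ i)\<^sup>2)"
    by (simp add: power2_eq_square sum_product)
  finally show ?thesis .
qed

lemma poly_eq_sum_upto:
  fixes x :: "'a::comm_semiring_1"
  assumes "degree p \<le> n"
  shows "poly p x = (\<Sum>i\<le>n. coeff p i * x ^ i)"
proof -
  have "poly p x = poly (\<Sum>i\<le>n. monom (coeff p i) i) x"
    using poly_as_sum_of_monoms'[OF assms] by simp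
  then show ?thesis
    by (simp add: poly_sum poly_monom)
qed

lemma exists_poly_vanishing_except:
  fixes Z :: "'a::idom set"
  assumes "finite Z" and "z \<in> Z"
  obtains p where "degree p = card Z - 1" and "poly p z \<noteq> 0"
    and "\<And>y. y \<in> Z \<Longrightarrow> y \<noteq> z \<Longrightarrow> poly p y = 0"
proof
  let ?p = "\<Prod>y\<in>Z - {z}. [:-y, 1:]"
  show "degree ?p = card Z - 1"
    using assms by (simp add: degree_prod_eq_sum_degree card_Diff_singleton)
  show "poly ?p z \<noteq> 0"
    using assms by (simp add: poly_prod)
  show "poly ?p y = 0" if "y \<in> Z" "y \<noteq> z" for y
    using assms that by (simp add: poly_prod prod_zero)
qed

lemma psd_localizing_matrix_iff:
  fixes f :: "'a \<Rightarrow> real" and \<phi> :: "real \<Rightarrow> real"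
  assumes "finite \<Omega>" and "card (f ` \<Omega>) \<le> Suc r"
  shows "psd_mat r (\<lambda>i j. \<Sum>v\<in>\<Omega>. \<phi> (f v) * f v ^ (i + j)) \<longleftrightarrow> (\<forall>v\<in>\<Omega>. 0 \<le> \<phi> (f v))"
proof
  assume psd: "psd_mat r (\<lambda>i j. \<Sum>v\<in>\<Omega>. \<phi> (f v) * f v ^ (i + j))"
  show "\<forall>v\<in>\<Omega>. 0 \<le> \<phi> (f v)"
  proof (rule ccontr)
    assume "\<not> (\<forall>v\<in>\<Omega>. 0 \<le> \<phi> (f v))"
    then obtain v\<^sub>0 where v\<^sub>0: "v\<^sub>0 \<in> \<Omega>" "\<phi> (f v\<^sub>0) < 0"
      by auto
    obtain p where deg: "degree p = card (f ` \<Omega>) - 1" and nonzero: "poly p (f v\<^sub>0) \<noteq> 0"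
      and vanish: "\<And>y. y \<in> f ` \<Omega> \<Longrightarrow> y \<noteq> f v\<^sub>0 \<Longrightarrow> poly p y = 0"
      using exists_poly_vanishing_except[of "f ` \<Omega>" "f v\<^sub>0"] assms(1) v\<^sub>0(1) by blast
    have poly_eq: "poly p (f v) = (\<Sum>i\<le>r. coeff p i * f v ^ i)" for v
      using deg assms(2) by (intro poly_eq_sum_upto) simp
    have "0 \<le> (\<Sum>v\<in>\<Omega>. \<phi> (f v) * (poly p (f v))\<^sup>2)"
      using psd[unfolded psd_mat_def quadratic_form_moment_matrix, rule_format, of "coeff p"]
      by (simp add: poly_eq)
    moreover have "(\<Sum>v\<in>\<Omega>. \<phi> (f v) * (poly p (f v))\<^sup>2) < 0"
    proof -
      have "0 < (\<Sum>v\<in>\<Omega>. - (\<phi> (f v) * (poly p (f v))\<^sup>2))"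
      proof (rule sum_pos2[OF assms(1) v\<^sub>0(1)])
        show "0 < - (\<phi> (f v\<^sub>0) * (poly p (f v\<^sub>0))\<^sup>2)"
          using v\<^sub>0(2) nonzero by (simp add: mult_neg_pos)
        show "0 \<le> - (\<phi> (f v) * (poly p (f v))\<^sup>2)" if "v \<in> \<Omega>" for v
          using that v\<^sub>0(2) vanish[of "f v"]
          by (cases "f v = f v\<^sub>0") (auto simp: mult_nonpos_nonneg)
      qed
      then show ?thesis
        by (simp add: sum_negf)
    qed
    ultimately show False
      by linarith
  qed
next
  assume "\<forall>v\<in>\<Omega>. 0 \<le> \<phi> (f v)"
  then show "psd_mat r (\<lambda>i j. \<Sum>v\<in>\<Omega>. \<phi> (f v) * f v ^ (i + j))"
    unfolding psd_mat_def quadratic_form_moment_matrix by (auto intro!: sum_nonneg)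
qed

lemma hankel_combination_push_moment:
  "a * hankel (push_moment f \<Omega>) i j + b * hankel_x (push_moment f \<Omega>) i j
     = (\<Sum>v\<in>\<Omega>. (a + b * f v) * f v ^ (i + j))"
  by (simp add: hankel_def hankel_x_def push_moment_def sum_distrib_left sum.distrib
      algebra_simps)

lemma tau_l_push_moment:
  fixes f :: "'a \<Rightarrow> real"
  assumes "finite \<Omega>" and "\<Omega> \<noteq> {}" and "card (f ` \<Omega>) \<le> Suc r"
  shows "tau_l (push_moment f \<Omega>) r = Min (f ` \<Omega>)"
proof -
  have "hankel_x (push_moment f \<Omega>) i j - a * hankel (push_moment f \<Omega>) i j
      = (\<Sum>v\<in>\<Omega>. (f v - a) * f v ^ (i + j))" for a i j
    using hankel_combination_push_moment[of "- a" f \<Omega> i j 1] by simp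
  then have "{a. psd_mat r (\<lambda>i j. hankel_x (push_moment f \<Omega>) i j - a * hankel (push_moment f \<Omega>) i j)}
      = {..Min (f ` \<Omega>)}"
    using psd_localizing_matrix_iff[of \<Omega> f r "\<lambda>t. t - _"] assms by (simp add: atMost_def)
  then show ?thesis
    unfolding tau_l_def by simp
qed

lemma tau_u_push_moment:
  fixes f :: "'a \<Rightarrow> real"
  assumes "finite \<Omega>" and "\<Omega> \<noteq> {}" and "card (f ` \<Omega>) \<le> Suc r"
  shows "tau_u (push_moment f \<Omega>) r = Max (f ` \<Omega>)"
proof -
  have "a * hankel (push_moment f \<Omega>) i j - hankel_x (push_moment f \<Omega>) i j
      = (\<Sum>v\<in>\<Omega>. (a - f v) * f v ^ (i + j))" for a i j
    using hankel_combination_push_moment[of a f \<Omega> i j "- 1"] by simp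
  then have "{a. psd_mat r (\<lambda>i j. a * hankel (push_moment f \<Omega>) i j - hankel_x (push_moment f \<Omega>) i j)}
      = {Max (f ` \<Omega>)..}"
    using psd_localizing_matrix_iff[of \<Omega> f r "\<lambda>t. _ - t"] assms by (simp add: atLeast_def)
  then show ?thesis
    unfolding tau_u_def by simp
qed

theorem lemma2p4:
  fixes \<Omega> :: "(real ^ 'n) set" and f :: "real ^ 'n \<Rightarrow> real"
  assumes "finite \<Omega>" and "\<Omega> \<noteq> {}"
  shows "tau_l (push_moment f \<Omega>) (card (f ` \<Omega>) - 1) = Min (f ` \<Omega>)
    \<and> tau_u (push_moment f \<Omega>) (card (f ` \<Omega>) - 1) = Max (f ` \<Omega>)"
  using tau_l_push_moment[OF assms] tau_u_push_moment[OF assms] by simp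

end
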